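(* Let $l,r$ be positive integers. For every $n\ge r$, the sequence $k\mapsto L_r^{(l)}(n,k)$ is log-concave, i.e. $L_r^{(l)}(n,k)^2\ge L_r^{(l)}(n,k-1)L_r^{(l)}(n,k+1)$ for all $k$.
   Context: For a set partition $\Pi$ of $[n]=\{1,\dots,n\}$, the block leader set $\mathrm{bl}(\Pi)$ is the set of minimum elements of the blocks of $\Pi$. The $(l,r)$-Lah number $L_r^{(l)}(n,k)$ is the number of $l$-tuples $(\Pi_1,\dots,\Pi_l)$ where each $\Pi_j$ is a partition of $[n]$ into $k$ nonempty blocks each equipped with a linear order, such that $\{1,\dots,r\}\subseteq\mathrm{bl}(\Pi_1)$ and $\mathrm{bl}(\Pi_1)=\mathrm{bl}(\Pi_2)=\cdots=\mathrm{bl}(\Pi_l)$ (and $L_r^{(l)}(n,k)=0$ when no such tuples exist). *)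

theory Defs
  imports Main
begin

text \<open>A partition of [n] into k nonempty blocks, each equipped with a linear order:
  each block is represented by a duplicate-free nonempty list (the list order is the
  linear order on the block); the underlying sets of the lists are pairwise disjoint
  and cover {1..n}.\<close>
definition lah_partitions :: "nat \<Rightarrow> nat \<Rightarrow> nat list set set" where
  "lah_partitions n k = {P. finite P \<and> card P = k
      \<and> (\<forall>xs\<in>P. xs \<noteq> [] \<and> distinct xs)
      \<and> (\<forall>xs\<in>P. \<forall>ys\<in>P. xs \<noteq> ys \<longrightarrow> set xs \<inter> set ys = {})
      \<and> \<Union> (set ` P) = {1..n}}"

definition block_leaders :: "nat list set \<Rightarrow> nat set" where
  "block_leaders P = (\<lambda>xs. Min (set xs)) ` P"

text \<open>(l,r)-Lah number. l-tuples (P_1,...,P_l) are represented as functions on {0..<l}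
  (fixed to {} outside). Value 0 for negative k.\<close>
definition lah_lr :: "nat \<Rightarrow> nat \<Rightarrow> nat \<Rightarrow> int \<Rightarrow> nat" where
  "lah_lr l r n k = (if k < 0 then 0 else
     card {f :: nat \<Rightarrow> nat list set.
        (\<forall>j<l. f j \<in> lah_partitions n (nat k)) \<and> (\<forall>j\<ge>l. f j = {})
        \<and> {1..r} \<subseteq> block_leaders (f 0)
        \<and> (\<forall>j<l. block_leaders (f j) = block_leaders (f 0))})"

end

theory Submission
  imports Defs "HOL-Probability.Product_PMF"
begin

text \<open>
  Grouping the l-tuples by their common leader set S gives
  L_r^(l)(n,k) = \<Sum> W(n,S)^l over all S with {1..r} \<subseteq> S \<subseteq> {1..n} and |S| = k, where W(n,S)
  counts the partitions of {1..n} into ordered blocks with leader set S. Deleting n shows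
  W(n,S) = W(n-1, S - {n}) if n is a leader (then [n] is a block), and
  W(n,S) = (n-1+|S|) W(n-1,S) otherwise, since n can be put into any of the n-1+|S| gaps of the
  blocks. Hence T(n,k) = L_r^(l)(n,k) satisfies T(n,k) = T(n-1,k-1) + (n+k-1)^l T(n-1,k) with
  T(r,k) = [k = r]. For every triangle of this shape with a positive log-concave weight f in
  place of (n+k-1)^l, induction on n proves the stronger f(n+k+1) T(n,k-1) T(n,k+1) \<le>
  f(n+k) T(n,k)^2, and for nondecreasing f this yields log-concavity.
\<close>

section \<open>Partitions into ordered blocks\<close>

definition ordered_partition :: "'a set \<Rightarrow> 'a list set \<Rightarrow> bool" where
  "ordered_partition U P \<longleftrightarrow> finite P \<and> (\<forall>xs\<in>P. xs \<noteq> [] \<and> distinct xs)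
      \<and> (\<forall>xs\<in>P. \<forall>ys\<in>P. xs \<noteq> ys \<longrightarrow> set xs \<inter> set ys = {}) \<and> \<Union> (set ` P) = U"

lemma lah_partitions_eq: "lah_partitions n k = {P. ordered_partition {1..n} P \<and> card P = k}"
  unfolding lah_partitions_def ordered_partition_def by auto

lemma ordered_partitionD:
  assumes "ordered_partition U P"
  shows "finite P" "\<And>xs. xs \<in> P \<Longrightarrow> xs \<noteq> []" "\<And>xs. xs \<in> P \<Longrightarrow> distinct xs"
    "\<And>xs ys. xs \<in> P \<Longrightarrow> ys \<in> P \<Longrightarrow> xs \<noteq> ys \<Longrightarrow> set xs \<inter> set ys = {}"
    "\<Union> (set ` P) = U"
  using assms unfolding ordered_partition_def by blast+

lemma ordered_partition_block_subset: "ordered_partition U P \<Longrightarrow> xs \<in> P \<Longrightarrow> set xs \<subseteq> U"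
  unfolding ordered_partition_def by blast

lemma ordered_partition_remove_block:
  assumes "ordered_partition U P" "xs \<in> P"
  shows "ordered_partition (U - set xs) (P - {xs})"
proof -
  note D = ordered_partitionD[OF assms(1)]
  have "\<Union> (set ` (P - {xs})) = U - set xs"
    using D(4,5) assms(2) by blast
  then show ?thesis
    using D(1-4) unfolding ordered_partition_def by auto
qed

lemma ordered_partition_insert_block:
  assumes "ordered_partition U P" "xs \<noteq> []" "distinct xs" "set xs \<inter> U = {}"
  shows "ordered_partition (U \<union> set xs) (insert xs P)"
proof -
  note D = ordered_partitionD[OF assms(1)]
  have "set ys \<inter> set xs = {}" if "ys \<in> P" for ys
    using assms(4) D(5) that by blast
  then show ?thesis
    using D(1-5) assms(2,3) unfolding ordered_partition_def by blast
qed

lemma finite_ordered_partitions: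
  assumes "finite U"
  shows "finite {P. ordered_partition U P}"
proof (rule finite_subset)
  show "{P. ordered_partition U P} \<subseteq> Pow {xs. set xs \<subseteq> U \<and> distinct xs}"
    unfolding ordered_partition_def by auto
  show "finite (Pow {xs. set xs \<subseteq> U \<and> distinct xs})"
    using finite_subset_distinct[OF assms] by simp
qed

lemma sum_length_ordered_partition:
  assumes "ordered_partition U P"
  shows "(\<Sum>xs\<in>P. length xs) = card U"
proof -
  note D = ordered_partitionD[OF assms]
  have "(\<Sum>xs\<in>P. length xs) = (\<Sum>xs\<in>P. card (set xs))"
    using D(3) by (simp add: distinct_card)
  also have "\<dots> = card (\<Union> (set ` P))"
    by (rule card_UN_disjoint[symmetric]) (use D(1,4) in auto)
  finally show ?thesis
    using D(5) by simp
qed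

lemma inj_on_Min_set:
  assumes "ordered_partition U P"
  shows "inj_on (\<lambda>xs. Min (set xs)) P"
proof (rule inj_onI)
  fix xs ys
  assume "xs \<in> P" "ys \<in> P" and Min_eq: "Min (set xs) = Min (set ys)"
  with ordered_partitionD(2)[OF assms] have "Min (set xs) \<in> set xs \<inter> set ys"
    by (metis IntI Min_in List.finite_set set_empty)
  with ordered_partitionD(4)[OF assms] \<open>xs \<in> P\<close> \<open>ys \<in> P\<close> show "xs = ys"
    by blast
qed

lemma card_block_leaders: "ordered_partition U P \<Longrightarrow> card (block_leaders P) = card P"
  unfolding block_leaders_def by (blast intro: card_image inj_on_Min_set)

lemma block_leaders_subset: "ordered_partition U P \<Longrightarrow> block_leaders P \<subseteq> U"
  unfolding block_leaders_def ordered_partition_def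
  by (auto intro!: UN_I[OF _ Min_in])

lemma block_leaders_insert: "block_leaders (insert xs P) = insert (Min (set xs)) (block_leaders P)"
  unfolding block_leaders_def by simp

lemma block_leaders_remove:
  "ordered_partition U P \<Longrightarrow> xs \<in> P \<Longrightarrow> block_leaders (P - {xs}) = block_leaders P - {Min (set xs)}"
  unfolding block_leaders_def by (simp add: inj_on_image_set_diff[OF inj_on_Min_set])

lemma block_leaders_exchange:
  assumes "ordered_partition U P" "xs \<in> P" "Min (set ys) = Min (set xs)"
  shows "block_leaders (insert ys (P - {xs})) = block_leaders P"
  using assms by (auto simp: block_leaders_insert block_leaders_remove block_leaders_def)

section \<open>Grouping by leader sets\<close>

definition lah_with_leaders :: "nat \<Rightarrow> nat set \<Rightarrow> nat list set set" where
  "lah_with_leaders n S = {P. ordered_partition {1..n} P \<and> block_leaders P = S}"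

definition leader_sets :: "nat \<Rightarrow> nat \<Rightarrow> nat \<Rightarrow> nat set set" where
  "leader_sets r n k = {S. S \<subseteq> {1..n} \<and> {1..r} \<subseteq> S \<and> card S = k}"

definition lah_power_sum :: "nat \<Rightarrow> nat \<Rightarrow> nat \<Rightarrow> nat \<Rightarrow> nat" where
  "lah_power_sum l r n k = (\<Sum>S\<in>leader_sets r n k. card (lah_with_leaders n S) ^ l)"

lemma finite_lah_with_leaders: "finite (lah_with_leaders n S)"
  unfolding lah_with_leaders_def
  by (rule finite_subset[OF _ finite_ordered_partitions[of "{1..n}"]]) auto

lemma finite_leader_sets: "finite (leader_sets r n k)"
  unfolding leader_sets_def by (rule finite_subset[of _ "Pow {1..n}"]) auto

lemma lah_tuples_eq_Union_leader_sets:
  fixes l :: nat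
  assumes "1 \<le> l"
  shows "{f. (\<forall>j<l. f j \<in> lah_partitions n k) \<and> (\<forall>j\<ge>l. f j = {})
        \<and> {1..r} \<subseteq> block_leaders (f 0) \<and> (\<forall>j<l. block_leaders (f j) = block_leaders (f 0))}
      = (\<Union>S\<in>leader_sets r n k. PiE_dflt {..<l} {} (\<lambda>_. lah_with_leaders n S))"
    (is "?F = (\<Union>S\<in>_. ?T S)")
proof
  show "?F \<subseteq> (\<Union>S\<in>leader_sets r n k. ?T S)"
  proof (rule subsetI, elim CollectE conjE)
    fix f
    assume part: "\<forall>j<l. f j \<in> lah_partitions n k" and f_out: "\<forall>j\<ge>l. f j = {}"
      and r_S: "{1..r} \<subseteq> block_leaders (f 0)"
      and lead: "\<forall>j<l. block_leaders (f j) = block_leaders (f 0)"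
    define S where "S = block_leaders (f 0)"
    have "ordered_partition {1..n} (f 0)" "card (f 0) = k"
      using part[rule_format, of 0] assms by (auto simp: lah_partitions_eq)
    with r_S have "S \<in> leader_sets r n k"
      unfolding leader_sets_def S_def by (simp add: block_leaders_subset card_block_leaders)
    moreover have "f j \<in> lah_with_leaders n S" if "j < l" for j
      using part[rule_format, OF that] lead[rule_format, OF that]
      unfolding lah_with_leaders_def lah_partitions_eq S_def by simp
    then have "f \<in> ?T S"
      using f_out unfolding PiE_dflt_def by (auto simp: not_less)
    ultimately show "f \<in> (\<Union>S\<in>leader_sets r n k. ?T S)"
      by blast
  qed
next
  show "(\<Union>S\<in>leader_sets r n k. ?T S) \<subseteq> ?F"
  proof
    fix f
    assume "f \<in> (\<Union>S\<in>leader_sets r n k. ?T S)"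
    then obtain S where S: "S \<in> leader_sets r n k" and f: "f \<in> ?T S"
      by blast
    have "ordered_partition {1..n} (f j) \<and> block_leaders (f j) = S" if "j < l" for j
      using f that by (simp add: PiE_dflt_def lah_with_leaders_def)
    with S f assms show "f \<in> ?F"
      by (simp add: PiE_dflt_def lah_partitions_eq leader_sets_def) (metis card_block_leaders)
  qed
qed

lemma lah_lr_eq_lah_power_sum:
  assumes "1 \<le> l" "0 \<le> k"
  shows "lah_lr l r n k = lah_power_sum l r n (nat k)"
proof -
  let ?T = "\<lambda>S. PiE_dflt {..<l} {} (\<lambda>_. lah_with_leaders n S)"
  have "lah_lr l r n k = card (\<Union>S\<in>leader_sets r n (nat k). ?T S)"
    unfolding lah_lr_def lah_tuples_eq_Union_leader_sets[OF assms(1)] using assms(2) by simp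
  also have "\<dots> = (\<Sum>S\<in>leader_sets r n (nat k). card (?T S))"
  proof (rule card_UN_disjoint)
    show "\<forall>S\<in>leader_sets r n (nat k). \<forall>S'\<in>leader_sets r n (nat k). S \<noteq> S' \<longrightarrow> ?T S \<inter> ?T S' = {}"
      using assms(1) by (fastforce simp: PiE_dflt_def lah_with_leaders_def)
  qed (auto simp: finite_leader_sets finite_lah_with_leaders)
  also have "\<dots> = lah_power_sum l r n (nat k)"
    by (simp add: lah_power_sum_def card_PiE_dflt finite_lah_with_leaders)
  finally show ?thesis .
qed

section \<open>Removing the largest element\<close>

lemma block_with_max_leader:
  assumes "ordered_partition {1..n} P" "ys \<in> P" "Min (set ys) = n"
  shows "ys = [n]"
proof -
  have "ys \<noteq> []" "distinct ys"
    using ordered_partitionD(2,3)[OF assms(1,2)] by auto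
  moreover have "set ys \<subseteq> {1..n}"
    using ordered_partition_block_subset[OF assms(1,2)] .
  with assms(3) have "set ys = {n}"
    using \<open>ys \<noteq> []\<close> by (auto intro!: antisym[OF _ Min_le] simp flip: assms(3))
  ultimately show ?thesis
    by (metis distinct_length_2_or_more emptyE empty_set insertI1 list.exhaust
        list.set_intros(1,2) singletonD)
qed

lemma Suc_not_in_block: "Q \<in> lah_with_leaders m S \<Longrightarrow> xs \<in> Q \<Longrightarrow> Suc m \<notin> set xs"
  unfolding lah_with_leaders_def using ordered_partition_block_subset by fastforce

lemma insert_singleton_in_lah_with_leaders:
  assumes "P \<in> lah_with_leaders m S"
  shows "insert [Suc m] P \<in> lah_with_leaders (Suc m) (insert (Suc m) S)"
proof -
  have P: "ordered_partition {1..m} P" "block_leaders P = S"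
    using assms unfolding lah_with_leaders_def by blast+
  have "ordered_partition ({1..m} \<union> set [Suc m]) (insert [Suc m] P)"
    by (rule ordered_partition_insert_block[OF P(1)]) auto
  moreover have "{1..m} \<union> set [Suc m] = {1..Suc m}"
    by auto
  ultimately show ?thesis
    unfolding lah_with_leaders_def using P(2) by (simp add: block_leaders_insert)
qed

lemma lah_with_leaders_new_leader_cases:
  assumes "P \<in> lah_with_leaders (Suc m) (insert (Suc m) S)" "Suc m \<notin> S"
  shows "[Suc m] \<in> P" "P - {[Suc m]} \<in> lah_with_leaders m S"
proof -
  have P: "ordered_partition {1..Suc m} P" "block_leaders P = insert (Suc m) S"
    using assms(1) unfolding lah_with_leaders_def by blast+
  then obtain ys where "ys \<in> P" "Min (set ys) = Suc m"
    unfolding block_leaders_def by (metis imageE insertI1)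
  with P(1) show singleton: "[Suc m] \<in> P"
    using block_with_max_leader by blast
  have "ordered_partition ({1..Suc m} - set [Suc m]) (P - {[Suc m]})"
    by (rule ordered_partition_remove_block[OF P(1) singleton])
  moreover have "{1..Suc m} - set [Suc m] = {1..m}"
    by auto
  moreover have "block_leaders (P - {[Suc m]}) = S"
    using block_leaders_remove[OF P(1) singleton] P(2) assms(2) by simp
  ultimately show "P - {[Suc m]} \<in> lah_with_leaders m S"
    unfolding lah_with_leaders_def by simp
qed

lemma card_lah_with_leaders_new_leader:
  assumes "Suc m \<notin> S"
  shows "card (lah_with_leaders (Suc m) (insert (Suc m) S)) = card (lah_with_leaders m S)"
proof -
  have "insert [Suc m] ` lah_with_leaders m S = lah_with_leaders (Suc m) (insert (Suc m) S)"
  proof (intro equalityI subsetI)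
    fix P
    assume "P \<in> lah_with_leaders (Suc m) (insert (Suc m) S)"
    with lah_with_leaders_new_leader_cases[OF _ assms] show "P \<in> insert [Suc m] ` lah_with_leaders m S"
      by (metis image_eqI insert_Diff)
  qed (auto intro: insert_singleton_in_lah_with_leaders)
  moreover have "inj_on (insert [Suc m]) (lah_with_leaders m S)"
  proof (rule inj_onI)
    fix P P'
    assume "P \<in> lah_with_leaders m S" "P' \<in> lah_with_leaders m S" "insert [Suc m] P = insert [Suc m] P'"
    moreover have "[Suc m] \<notin> P" "[Suc m] \<notin> P'"
      using Suc_not_in_block calculation(1,2) by force+
    ultimately show "P = P'"
      by (metis Diff_insert_absorb)
  qed
  ultimately show ?thesis
    by (metis card_image)
qed

definition insert_at :: "'a \<Rightarrow> nat \<Rightarrow> 'a list \<Rightarrow> 'a list" where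
  "insert_at x i xs = take i xs @ x # drop i xs"

lemma insert_at_not_Nil [simp]: "insert_at x i xs \<noteq> []"
  unfolding insert_at_def by simp

lemma set_insert_at [simp]: "set (insert_at x i xs) = insert x (set xs)"
proof -
  have "set xs = set (take i xs) \<union> set (drop i xs)"
    by (metis append_take_drop_id set_append)
  then show ?thesis
    unfolding insert_at_def by auto
qed

lemma distinct_insert_at: "distinct xs \<Longrightarrow> x \<notin> set xs \<Longrightarrow> distinct (insert_at x i xs)"
  using distinct_append[of "take i xs" "drop i xs"] in_set_takeD[of x i xs] in_set_dropD[of x i xs]
  unfolding insert_at_def by auto

lemma insert_at_eq_iff:
  assumes "x \<notin> set xs" "x \<notin> set ys" "i \<le> length xs" "j \<le> length ys"
  shows "insert_at x i xs = insert_at x j ys \<longleftrightarrow> i = j \<and> xs = ys"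
proof
  assume eq: "insert_at x i xs = insert_at x j ys"
  have "x \<notin> set (take i xs)" "x \<notin> set (drop i xs)"
    using assms(1) in_set_takeD in_set_dropD by metis+
  with eq have "take i xs = take j ys \<and> drop i xs = drop j ys"
    unfolding insert_at_def by (simp add: append_Cons_eq_iff)
  with assms(3,4) show "i = j \<and> xs = ys"
    by (metis append_take_drop_id length_take min_absorb2)
qed simp

lemma insert_at_cases:
  assumes "x \<in> set ys" "distinct ys"
  obtains i xs where "i \<le> length xs" "distinct xs" "x \<notin> set xs" "ys = insert_at x i xs"
proof -
  obtain as bs where ys: "ys = as @ x # bs"
    using split_list[OF assms(1)] by blast
  show thesis
  proof
    show "ys = insert_at x (length as) (as @ bs)"
      unfolding insert_at_def ys by simp
  qed (use assms(2) ys in auto)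
qed

lemma Min_insert_at:
  fixes x :: "'a :: linorder"
  assumes "xs \<noteq> []" "\<forall>a\<in>set xs. a \<le> x"
  shows "Min (set (insert_at x i xs)) = Min (set xs)"
proof -
  have "Min (set xs) \<le> x"
    using assms by simp
  with assms(1) show ?thesis
    by (simp add: min_absorb2)
qed

definition insert_into_block :: "'a \<Rightarrow> nat \<Rightarrow> 'a list \<Rightarrow> 'a list set \<Rightarrow> 'a list set" where
  "insert_into_block x i xs Q = insert (insert_at x i xs) (Q - {xs})"

lemma insert_into_block_in_lah_with_leaders:
  assumes "Q \<in> lah_with_leaders m S" "xs \<in> Q"
  shows "insert_into_block (Suc m) i xs Q \<in> lah_with_leaders (Suc m) S"
proof -
  have Q: "ordered_partition {1..m} Q" "block_leaders Q = S"
    using assms(1) unfolding lah_with_leaders_def by blast+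
  have xs: "set xs \<subseteq> {1..m}" "xs \<noteq> []" "distinct xs"
    using ordered_partition_block_subset[OF Q(1) assms(2)] ordered_partitionD(2,3)[OF Q(1) assms(2)]
    by auto
  then have "Suc m \<notin> set xs"
    by auto
  have "ordered_partition ({1..m} - set xs) (Q - {xs})"
    by (rule ordered_partition_remove_block[OF Q(1) assms(2)])
  then have "ordered_partition (({1..m} - set xs) \<union> set (insert_at (Suc m) i xs))
      (insert_into_block (Suc m) i xs Q)"
    unfolding insert_into_block_def
    by (rule ordered_partition_insert_block) (use xs \<open>Suc m \<notin> set xs\<close> in \<open>auto simp: distinct_insert_at\<close>)
  moreover have "({1..m} - set xs) \<union> set (insert_at (Suc m) i xs) = {1..Suc m}"
    using xs(1) by auto
  moreover have "Min (set (insert_at (Suc m) i xs)) = Min (set xs)"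
    by (rule Min_insert_at) (use xs in auto)
  then have "block_leaders (insert_into_block (Suc m) i xs Q) = S"
    unfolding insert_into_block_def using block_leaders_exchange[OF Q(1) assms(2)] Q(2) by simp
  ultimately show ?thesis
    unfolding lah_with_leaders_def by simp
qed

lemma remove_from_block_in_lah_with_leaders:
  assumes "P \<in> lah_with_leaders (Suc m) S" "ys \<in> P" "ys = insert_at (Suc m) i xs"
    and xs: "xs \<noteq> []" "distinct xs" "Suc m \<notin> set xs"
  shows "insert xs (P - {ys}) \<in> lah_with_leaders m S"
proof -
  have P: "ordered_partition {1..Suc m} P" "block_leaders P = S"
    using assms(1) unfolding lah_with_leaders_def by blast+
  have xs_sub: "set xs \<subseteq> {1..m}"
    using ordered_partition_block_subset[OF P(1) assms(2)] xs(3) assms(3)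
    by (auto simp: subset_iff le_Suc_eq)
  have "ordered_partition ({1..Suc m} - set ys) (P - {ys})"
    by (rule ordered_partition_remove_block[OF P(1) assms(2)])
  then have "ordered_partition (({1..Suc m} - set ys) \<union> set xs) (insert xs (P - {ys}))"
    by (rule ordered_partition_insert_block) (use xs assms(3) in auto)
  moreover have "({1..Suc m} - set ys) \<union> set xs = {1..m}"
    using xs_sub xs(3) assms(3) by auto
  moreover have "Min (set xs) = Min (set ys)"
    unfolding assms(3) by (rule Min_insert_at[symmetric]) (use xs xs_sub in auto)
  then have "block_leaders (insert xs (P - {ys})) = S"
    using block_leaders_exchange[OF P(1) assms(2)] P(2) by simp
  ultimately show ?thesis
    unfolding lah_with_leaders_def by simp
qed

lemma lah_with_leaders_Suc_cases:
  assumes "P \<in> lah_with_leaders (Suc m) S" "Suc m \<notin> S"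
  obtains Q xs i where "Q \<in> lah_with_leaders m S" "xs \<in> Q" "i \<le> length xs"
    "P = insert_into_block (Suc m) i xs Q"
proof -
  have P: "ordered_partition {1..Suc m} P" "block_leaders P = S"
    using assms(1) unfolding lah_with_leaders_def by blast+
  obtain ys where ys: "ys \<in> P" "Suc m \<in> set ys"
    using ordered_partitionD(5)[OF P(1)] by (metis UN_E atLeastAtMost_iff le_add1 le_refl plus_1_eq_Suc)
  obtain i xs where ix: "i \<le> length xs" "distinct xs" "Suc m \<notin> set xs"
    and ys_eq: "ys = insert_at (Suc m) i xs"
    using insert_at_cases[OF ys(2) ordered_partitionD(3)[OF P(1) ys(1)]] by blast
  have "xs \<noteq> []"
  proof
    assume "xs = []"
    then have "Suc m \<in> block_leaders P"
      using ys(1) ys_eq unfolding block_leaders_def by force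
    with P(2) assms(2) show False
      by simp
  qed
  have "xs \<notin> P - {ys}"
  proof
    assume "xs \<in> P - {ys}"
    then have "set xs \<inter> set ys = {}"
      using ordered_partitionD(4)[OF P(1)] ys(1) by blast
    with \<open>xs \<noteq> []\<close> ys_eq show False
      by auto
  qed
  then have "P = insert_into_block (Suc m) i xs (insert xs (P - {ys}))"
    unfolding insert_into_block_def using ys ys_eq by auto
  with remove_from_block_in_lah_with_leaders[OF assms(1) ys(1) ys_eq \<open>xs \<noteq> []\<close> ix(2,3)] ix(1)
  show thesis
    using that by blast
qed

lemma inj_on_insert_into_block:
  "inj_on (\<lambda>(Q, xs, i). insert_into_block (Suc m) i xs Q)
     (SIGMA Q:lah_with_leaders m S. SIGMA xs:Q. {..length xs})"
proof (rule inj_onI, clarsimp)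
  fix Q1 xs1 i1 Q2 xs2 i2
  assume Q1: "Q1 \<in> lah_with_leaders m S" "xs1 \<in> Q1" "i1 \<le> length xs1"
    and Q2: "Q2 \<in> lah_with_leaders m S" "xs2 \<in> Q2" "i2 \<le> length xs2"
    and eq: "insert_into_block (Suc m) i1 xs1 Q1 = insert_into_block (Suc m) i2 xs2 Q2"
  let ?ys1 = "insert_at (Suc m) i1 xs1" and ?ys2 = "insert_at (Suc m) i2 xs2"
  have fresh: "?ys1 \<notin> Q1" "?ys2 \<notin> Q1" "?ys1 \<notin> Q2" "?ys2 \<notin> Q2"
    using Suc_not_in_block[OF Q1(1)] Suc_not_in_block[OF Q2(1)] by fastforce+
  have "?ys2 \<in> insert ?ys1 (Q1 - {xs1})"
    using eq unfolding insert_into_block_def by blast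
  with fresh(2) have ys_eq: "?ys1 = ?ys2"
    by auto
  then have "i1 = i2 \<and> xs1 = xs2"
    using insert_at_eq_iff[OF Suc_not_in_block[OF Q1(1,2)] Suc_not_in_block[OF Q2(1,2)] Q1(3) Q2(3)]
    by blast
  moreover have "Q1 - {xs1} = Q2 - {xs2}"
  proof -
    have "Q1 - {xs1} = insert_into_block (Suc m) i1 xs1 Q1 - {?ys1}"
      unfolding insert_into_block_def using fresh(1) by auto
    also have "\<dots> = insert_into_block (Suc m) i2 xs2 Q2 - {?ys2}"
      using eq ys_eq by simp
    also have "\<dots> = Q2 - {xs2}"
      unfolding insert_into_block_def using fresh(4) by auto
    finally show ?thesis .
  qed
  ultimately show "Q1 = Q2 \<and> xs1 = xs2 \<and> i1 = i2"
    using Q1(2) Q2(2) by blast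
qed

lemma card_lah_with_leaders_Suc:
  assumes "Suc m \<notin> S"
  shows "card (lah_with_leaders (Suc m) S) = (m + card S) * card (lah_with_leaders m S)"
proof -
  let ?D = "SIGMA Q:lah_with_leaders m S. SIGMA xs:Q. {..length xs}"
  have "(\<lambda>(Q, xs, i). insert_into_block (Suc m) i xs Q) ` ?D = lah_with_leaders (Suc m) S"
  proof (intro equalityI subsetI)
    fix P
    assume "P \<in> lah_with_leaders (Suc m) S"
    then show "P \<in> (\<lambda>(Q, xs, i). insert_into_block (Suc m) i xs Q) ` ?D"
      by (rule lah_with_leaders_Suc_cases[OF _ assms]) force
  qed (auto intro: insert_into_block_in_lah_with_leaders)
  then have "card (lah_with_leaders (Suc m) S) = card ?D"
    using card_image[OF inj_on_insert_into_block] by metis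
  also have "\<dots> = (\<Sum>Q\<in>lah_with_leaders m S. \<Sum>xs\<in>Q. Suc (length xs))"
  proof (subst card_SigmaI)
    show "(\<Sum>Q\<in>lah_with_leaders m S. card (SIGMA xs:Q. {..length xs}))
        = (\<Sum>Q\<in>lah_with_leaders m S. \<Sum>xs\<in>Q. Suc (length xs))"
      by (intro sum.cong refl, subst card_SigmaI)
        (auto simp: lah_with_leaders_def dest: ordered_partitionD(1))
  qed (use finite_lah_with_leaders in blast, auto simp: lah_with_leaders_def dest: ordered_partitionD(1))
  also have "\<dots> = (\<Sum>Q\<in>lah_with_leaders m S. m + card S)"
  proof (rule sum.cong)
    fix Q
    assume "Q \<in> lah_with_leaders m S"
    then have Q: "ordered_partition {1..m} Q" "block_leaders Q = S"
      unfolding lah_with_leaders_def by blast+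
    have "(\<Sum>xs\<in>Q. Suc (length xs)) = (\<Sum>xs\<in>Q. length xs) + card Q"
      unfolding Suc_eq_plus1 sum.distrib by simp
    then show "(\<Sum>xs\<in>Q. Suc (length xs)) = m + card S"
      using sum_length_ordered_partition[OF Q(1)] card_block_leaders[OF Q(1)] Q(2) by simp
  qed simp
  finally show ?thesis
    by simp
qed

lemma card_lah_with_leaders_all: "card (lah_with_leaders m {1..m}) = 1"
proof (induction m)
  case 0
  have "lah_with_leaders 0 {} = {{}}"
    by (auto simp: lah_with_leaders_def ordered_partition_def block_leaders_def)
  then show ?case
    by simp
next
  case (Suc m)
  have "insert (Suc m) {1..m} = {1..Suc m}"
    by auto
  with card_lah_with_leaders_new_leader[of m "{1..m}"] Suc.IH show ?case
    by simp
qed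

lemma lah_power_sum_base: "lah_power_sum l r r k = (if k = r then 1 else 0)"
proof -
  have "leader_sets r r k = (if k = r then {{1..r}} else {})"
    unfolding leader_sets_def by auto
  then show ?thesis
    unfolding lah_power_sum_def using card_lah_with_leaders_all[of r] by simp
qed

lemma lah_power_sum_0:
  assumes "1 \<le> r"
  shows "lah_power_sum l r n 0 = 0"
proof -
  have "S \<notin> leader_sets r n 0" for S
  proof
    assume "S \<in> leader_sets r n 0"
    then have "finite S" "card S = 0" "1 \<in> S"
      using assms unfolding leader_sets_def by (auto intro: finite_subset)
    then show False
      by simp
  qed
  then have "leader_sets r n 0 = {}"
    by blast
  then show ?thesis
    unfolding lah_power_sum_def by simp
qed

lemma leader_sets_Suc:
  assumes "r \<le> m"
  shows "leader_sets r (Suc m) (Suc k) = insert (Suc m) ` leader_sets r m k \<union> leader_sets r m (Suc k)"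
proof (intro equalityI subsetI)
  fix S
  assume S: "S \<in> leader_sets r (Suc m) (Suc k)"
  show "S \<in> insert (Suc m) ` leader_sets r m k \<union> leader_sets r m (Suc k)"
  proof (cases "Suc m \<in> S")
    case True
    with S assms have "S - {Suc m} \<in> leader_sets r m k"
      unfolding leader_sets_def by (auto simp: subset_iff le_Suc_eq)
    with True show ?thesis
      by (metis UnI1 image_eqI insert_Diff)
  next
    case False
    with S show ?thesis
      unfolding leader_sets_def by (auto simp: subset_iff le_Suc_eq)
  qed
next
  fix S
  assume "S \<in> insert (Suc m) ` leader_sets r m k \<union> leader_sets r m (Suc k)"
  then consider S' where "S' \<in> leader_sets r m k" "S = insert (Suc m) S'" | "S \<in> leader_sets r m (Suc k)"
    by blast
  then show "S \<in> leader_sets r (Suc m) (Suc k)"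
  proof cases
    case 1
    then have "finite S'" "Suc m \<notin> S'"
      unfolding leader_sets_def by (auto intro: finite_subset)
    with 1 show ?thesis
      unfolding leader_sets_def by (auto simp: subset_iff)
  qed (auto simp: leader_sets_def subset_iff)
qed

lemma lah_power_sum_Suc:
  assumes "r \<le> m"
  shows "lah_power_sum l r (Suc m) (Suc k)
    = lah_power_sum l r m k + (m + Suc k) ^ l * lah_power_sum l r m (Suc k)"
proof -
  let ?c = "\<lambda>n S. card (lah_with_leaders n S) ^ l"
  have fresh: "Suc m \<notin> S" if "S \<in> leader_sets r m j" for S j
    using that unfolding leader_sets_def by auto
  have "lah_power_sum l r (Suc m) (Suc k)
      = sum (?c (Suc m)) (insert (Suc m) ` leader_sets r m k) + sum (?c (Suc m)) (leader_sets r m (Suc k))"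
    unfolding lah_power_sum_def leader_sets_Suc[OF assms]
    by (rule sum.union_disjoint) (auto simp: finite_leader_sets dest: fresh)
  also have "sum (?c (Suc m)) (insert (Suc m) ` leader_sets r m k) = lah_power_sum l r m k"
  proof -
    have "inj_on (insert (Suc m)) (leader_sets r m k)"
      by (rule inj_onI) (metis Diff_insert_absorb fresh)
    then show ?thesis
      unfolding lah_power_sum_def
      by (simp add: sum.reindex card_lah_with_leaders_new_leader fresh)
  qed
  also have "sum (?c (Suc m)) (leader_sets r m (Suc k)) = (m + Suc k) ^ l * lah_power_sum l r m (Suc k)"
    unfolding lah_power_sum_def sum_distrib_left
  proof (rule sum.cong)
    fix S
    assume S: "S \<in> leader_sets r m (Suc k)"
    then have "card S = Suc k"
      unfolding leader_sets_def by blast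
    with card_lah_with_leaders_Suc[OF fresh[OF S]]
    show "?c (Suc m) S = (m + Suc k) ^ l * ?c m S"
      by (metis power_mult_distrib)
  qed simp
  finally show ?thesis .
qed

section \<open>Log-concavity of weighted triangles\<close>

lemma log_concave_outer_le_inner:
  fixes x0 x1 x2 x3 d1 d2 d3 :: "'a :: linordered_idom"
  assumes nonneg: "0 \<le> x0" "0 \<le> x1" "0 \<le> x2" "0 \<le> x3"
    and weights: "0 \<le> d1" "0 < d2" "0 \<le> d3"
    and left: "d2 * (x0 * x2) \<le> d1 * x1\<^sup>2"
    and right: "d3 * (x1 * x3) \<le> d2 * x2\<^sup>2"
    and no_gap: "x1 * x2 = 0 \<Longrightarrow> x0 * x3 = 0"
  shows "d3 * (x0 * x3) \<le> d1 * (x1 * x2)"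
proof (cases "x1 * x2 = 0")
  case True
  with no_gap have "x0 * x3 = 0" .
  with True show ?thesis
    by (metis mult_zero_right order_refl)
next
  case False
  then have "0 < d2 * (x1 * x2)"
    using nonneg weights by (simp add: order_less_le)
  moreover have "(d2 * (x0 * x2)) * (d3 * (x1 * x3)) \<le> (d1 * x1\<^sup>2) * (d2 * x2\<^sup>2)"
    by (rule mult_mono[OF left right]) (use nonneg weights in auto)
  then have "(d2 * (x1 * x2)) * (d3 * (x0 * x3)) \<le> (d2 * (x1 * x2)) * (d1 * (x1 * x2))"
    by (simp add: power2_eq_square algebra_simps)
  ultimately show ?thesis
    by (simp only: mult_le_cancel_left_pos)
qed

text \<open>With x0, ..., x3 standing for t n j, ..., t n (j + 3) and d1, ..., d4 for
  f (n + j + 1), ..., f (n + j + 4), this is the induction step from row n to row n + 1 of the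
  weighted triangles below.\<close>

lemma triangle_step_inequality:
  fixes x0 x1 x2 x3 d1 d2 d3 d4 :: "'a :: linordered_idom"
  assumes nonneg: "0 \<le> x0" "0 \<le> x1" "0 \<le> x2" "0 \<le> x3"
    and pos: "0 < d1" "0 < d2" "0 < d3" "0 < d4"
    and d_log_concave: "d1 * d4 \<le> d2 * d3"
    and left: "d2 * (x0 * x2) \<le> d1 * x1\<^sup>2"
    and right: "d3 * (x1 * x3) \<le> d2 * x2\<^sup>2"
    and no_gap: "x1 * x2 = 0 \<Longrightarrow> x0 * x3 = 0"
  shows "d4 * ((x0 + d1 * x1) * (x2 + d3 * x3)) \<le> d3 * (x1 + d2 * x2)\<^sup>2"
proof -
  have t02: "d4 * (x0 * x2) \<le> d3 * x1\<^sup>2"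
  proof -
    have "d2 * (d4 * (x0 * x2)) \<le> d4 * (d1 * x1\<^sup>2)"
      using mult_left_mono[OF left, of d4] pos by (simp add: algebra_simps)
    also have "\<dots> \<le> d2 * (d3 * x1\<^sup>2)"
      using mult_right_mono[OF d_log_concave, of "x1\<^sup>2"] by (simp add: algebra_simps)
    finally show ?thesis
      using pos(2) by simp
  qed
  have t13: "d4 * d1 * d3 * (x1 * x3) \<le> d3 * d2\<^sup>2 * x2\<^sup>2"
  proof -
    have "d4 * d1 * d3 * (x1 * x3) \<le> (d1 * d4) * (d2 * x2\<^sup>2)"
      using mult_left_mono[OF right, of "d1 * d4"] pos by (simp add: algebra_simps)
    also have "\<dots> \<le> (d2 * d3) * (d2 * x2\<^sup>2)"
      using mult_right_mono[OF d_log_concave, of "d2 * x2\<^sup>2"] pos by simp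
    finally show ?thesis
      by (simp add: power2_eq_square algebra_simps)
  qed
  have t12: "d4 * d1 * (x1 * x2) \<le> d2 * d3 * (x1 * x2)"
    using mult_right_mono[OF d_log_concave, of "x1 * x2"] nonneg by (simp add: algebra_simps)
  have "d3 * d4 * (x0 * x3) \<le> (d1 * d4) * (x1 * x2)"
    using mult_left_mono[OF log_concave_outer_le_inner[OF nonneg _ _ _ left right no_gap], of d4] pos
    by (simp add: algebra_simps)
  also have "\<dots> \<le> d2 * d3 * (x1 * x2)"
    using mult_right_mono[OF d_log_concave, of "x1 * x2"] nonneg by simp
  finally have t03: "d3 * d4 * (x0 * x3) \<le> d2 * d3 * (x1 * x2)" .
  have "d4 * ((x0 + d1 * x1) * (x2 + d3 * x3))
      = d4 * (x0 * x2) + d3 * d4 * (x0 * x3) + d4 * d1 * (x1 * x2) + d4 * d1 * d3 * (x1 * x3)"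
    by (simp add: algebra_simps)
  moreover have "d3 * (x1 + d2 * x2)\<^sup>2 = d3 * x1\<^sup>2 + 2 * (d2 * d3 * (x1 * x2)) + d3 * d2\<^sup>2 * x2\<^sup>2"
    by (simp add: power2_eq_square algebra_simps)
  ultimately show ?thesis
    using t02 t03 t12 t13 by simp
qed

text \<open>For f j = j and r = 1 this is the triangle of the unsigned Lah numbers.\<close>

locale weighted_triangle =
  fixes t :: "nat \<Rightarrow> nat \<Rightarrow> 'a :: linordered_idom" and f :: "nat \<Rightarrow> 'a" and r :: nat
  assumes first_row: "t r k = (if k = r then 1 else 0)"
    and first_column: "r \<le> n \<Longrightarrow> t n 0 = 0"
    and Suc_row: "r \<le> n \<Longrightarrow> t (Suc n) (Suc k) = t n k + f (n + Suc k) * t n (Suc k)"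
    and weight_pos: "0 < j \<Longrightarrow> 0 < f j"
    and weight_log_concave: "f j * f (j + 2) \<le> (f (j + 1))\<^sup>2"
begin

lemma first_row_index_pos: "0 < r"
  using first_row[of 0] first_column[of r] by (cases r) auto

lemma weight_log_concave_gap: "f j * f (j + 3) \<le> f (j + 1) * f (j + 2)"
proof -
  have pos: "0 < f (j + 1)" "0 < f (j + 2)" "0 < f (j + 3)"
    using weight_pos by auto
  have "(f j * f (j + 3)) * (f (j + 1) * f (j + 2)) = (f j * f (j + 2)) * (f (j + 1) * f (j + 3))"
    by (simp add: algebra_simps)
  also have "\<dots> \<le> (f (j + 1))\<^sup>2 * (f (j + 1) * f (j + 3))"
    using weight_log_concave[of j] pos by (intro mult_right_mono) auto
  also have "\<dots> \<le> (f (j + 1))\<^sup>2 * (f (j + 2))\<^sup>2"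
    using weight_log_concave[of "j + 1"] by (intro mult_left_mono) (simp_all add: eval_nat_numeral)
  also have "\<dots> = (f (j + 1) * f (j + 2)) * (f (j + 1) * f (j + 2))"
    by (simp add: power2_eq_square algebra_simps)
  finally show ?thesis
    using pos by simp
qed

lemma support: "r \<le> n \<Longrightarrow> 0 \<le> t n k \<and> (0 < t n k \<longleftrightarrow> r \<le> k \<and> k \<le> n)"
proof (induction n arbitrary: k)
  case 0
  then show ?case
    using first_row_index_pos by simp
next
  case (Suc n)
  show ?case
  proof (cases "Suc n = r")
    case True
    then show ?thesis
      using first_row[of k] by auto
  next
    case False
    with Suc.prems have "r \<le> n"
      by simp
    show ?thesis
    proof (cases k)
      case 0
      then show ?thesis
        using first_column[OF Suc.prems] first_row_index_pos by simp
    next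
      case (Suc j)
      have "0 < f (n + k)"
        using weight_pos Suc by simp
      with Suc.IH[OF \<open>r \<le> n\<close>, of j] Suc.IH[OF \<open>r \<le> n\<close>, of k] \<open>Suc n \<noteq> r\<close> show ?thesis
        unfolding Suc Suc_row[OF \<open>r \<le> n\<close>]
        by (auto simp: add_pos_nonneg add_nonneg_pos zero_less_mult_iff)
    qed
  qed
qed

lemma nonneg: "r \<le> n \<Longrightarrow> 0 \<le> t n k"
  using support by blast

lemma pos_iff: "r \<le> n \<Longrightarrow> 0 < t n k \<longleftrightarrow> r \<le> k \<and> k \<le> n"
  using support by blast

lemma no_internal_zero:
  assumes "r \<le> n" "t n (j + 1) * t n (j + 2) = 0"
  shows "t n j * t n (j + 3) = 0"
proof -
  have "\<not> 0 < t n (j + 1) \<or> \<not> 0 < t n (j + 2)"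
    using assms(2) by force
  then have "\<not> r \<le> j \<or> \<not> j + 3 \<le> n"
    using pos_iff[OF assms(1), of "j + 1"] pos_iff[OF assms(1), of "j + 2"] by linarith
  then have "t n j \<le> 0 \<or> t n (j + 3) \<le> 0"
    using pos_iff[OF assms(1), of j] pos_iff[OF assms(1), of "j + 3"] by linarith
  then show ?thesis
    using nonneg[OF assms(1), of j] nonneg[OF assms(1), of "j + 3"] by force
qed

lemma strong_log_concave_Suc:
  assumes "r \<le> n"
    and IH: "\<And>k. f (n + k + 2) * (t n k * t n (k + 2)) \<le> f (n + k + 1) * (t n (k + 1))\<^sup>2"
  shows "f (n + j + 4) * (t (Suc n) (Suc j) * t (Suc n) (j + 3))
    \<le> f (n + j + 3) * (t (Suc n) (j + 2))\<^sup>2"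
proof -
  let ?x0 = "t n j" and ?x1 = "t n (j + 1)" and ?x2 = "t n (j + 2)" and ?x3 = "t n (j + 3)"
  let ?d1 = "f (n + j + 1)" and ?d2 = "f (n + j + 2)" and ?d3 = "f (n + j + 3)" and ?d4 = "f (n + j + 4)"
  have rows: "t (Suc n) (Suc j) = ?x0 + ?d1 * ?x1" "t (Suc n) (j + 2) = ?x1 + ?d2 * ?x2"
      "t (Suc n) (j + 3) = ?x2 + ?d3 * ?x3"
    using Suc_row[OF assms(1)] by (simp_all add: eval_nat_numeral)
  have "?d4 * ((?x0 + ?d1 * ?x1) * (?x2 + ?d3 * ?x3)) \<le> ?d3 * (?x1 + ?d2 * ?x2)\<^sup>2"
  proof (rule triangle_step_inequality)
    show "0 \<le> ?x0" "0 \<le> ?x1" "0 \<le> ?x2" "0 \<le> ?x3"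
      using nonneg[OF assms(1)] by blast+
    show "0 < ?d1" "0 < ?d2" "0 < ?d3" "0 < ?d4"
      using weight_pos by simp_all
    show "?d1 * ?d4 \<le> ?d2 * ?d3"
      using weight_log_concave_gap[of "n + j + 1"] by (simp add: eval_nat_numeral)
    show "?d2 * (?x0 * ?x2) \<le> ?d1 * ?x1\<^sup>2"
      using IH[of j] by (simp add: eval_nat_numeral)
    show "?d3 * (?x1 * ?x3) \<le> ?d2 * ?x2\<^sup>2"
      using IH[of "j + 1"] by (simp add: eval_nat_numeral)
    show "?x1 * ?x2 = 0 \<Longrightarrow> ?x0 * ?x3 = 0"
      by (rule no_internal_zero[OF assms(1)])
  qed
  then show ?thesis
    unfolding rows .
qed

lemma strong_log_concave:
  "r \<le> n \<Longrightarrow> f (n + k + 2) * (t n k * t n (k + 2)) \<le> f (n + k + 1) * (t n (k + 1))\<^sup>2"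
proof (induction n arbitrary: k)
  case 0
  then show ?case
    using first_row_index_pos by simp
next
  case (Suc n)
  have weight_nonneg: "0 \<le> f (Suc n + k + 1) * (t (Suc n) (k + 1))\<^sup>2"
    using weight_pos[of "Suc n + k + 1"] by simp
  consider "Suc n = r" | "r \<le> n" "k = 0" | j where "r \<le> n" "k = Suc j"
    using Suc.prems by (cases k) force+
  then show ?case
  proof cases
    case 1
    then show ?thesis
      using first_row weight_nonneg by auto
  next
    case 2
    then show ?thesis
      using first_column[OF Suc.prems] weight_nonneg by simp
  next
    case (3 j)
    then show ?thesis
      using strong_log_concave_Suc[OF \<open>r \<le> n\<close> Suc.IH[OF \<open>r \<le> n\<close>], of j]
      by (simp add: eval_nat_numeral)
  qed
qed

lemma log_concave:
  assumes "mono f" "r \<le> n"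
  shows "t n k * t n (k + 2) \<le> (t n (k + 1))\<^sup>2"
proof -
  have "f (n + k + 1) * (t n k * t n (k + 2)) \<le> f (n + k + 2) * (t n k * t n (k + 2))"
    using monoD[OF assms(1), of "n + k + 1" "n + k + 2"] nonneg[OF assms(2)]
    by (intro mult_right_mono) simp_all
  also have "\<dots> \<le> f (n + k + 1) * (t n (k + 1))\<^sup>2"
    using strong_log_concave[OF assms(2)] .
  finally show ?thesis
    using weight_pos[of "n + k + 1"] by simp
qed

end

lemma weighted_triangle_lah_power_sum:
  assumes "1 \<le> r"
  shows "weighted_triangle (\<lambda>n k. int (lah_power_sum l r n k)) (\<lambda>j. int j ^ l) r"
proof
  fix j :: nat
  have "int j * int (j + 2) \<le> (int (j + 1))\<^sup>2"
    by (simp add: power2_eq_square algebra_simps)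
  then have "(int j * int (j + 2)) ^ l \<le> ((int (j + 1))\<^sup>2) ^ l"
    by (rule power_mono) simp
  moreover have "((int (j + 1))\<^sup>2) ^ l = (int (j + 1) ^ l)\<^sup>2"
    by (simp flip: power_mult add: mult.commute)
  ultimately show "int j ^ l * int (j + 2) ^ l \<le> (int (j + 1) ^ l)\<^sup>2"
    by (simp only: power_mult_distrib)
qed (auto simp: lah_power_sum_base lah_power_sum_0[OF assms] lah_power_sum_Suc)

theorem mainTheorem8:
  fixes l r n :: nat and k :: int
  assumes "l \<ge> 1" and "r \<ge> 1" and "n \<ge> r"
  shows "(lah_lr l r n k)^2 \<ge> lah_lr l r n (k - 1) * lah_lr l r n (k + 1)"
proof (cases "k \<ge> 1")
  case False
  then have "lah_lr l r n (k - 1) = 0"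
    unfolding lah_lr_def by simp
  then show ?thesis
    by simp
next
  case True
  define j where "j = nat (k - 1)"
  have k: "k = int j + 1"
    using True unfolding j_def by simp
  interpret weighted_triangle "\<lambda>n k. int (lah_power_sum l r n k)" "\<lambda>j. int j ^ l" r
    using weighted_triangle_lah_power_sum assms(2) .
  have "mono (\<lambda>j. int j ^ l)"
    by (rule monoI) (simp add: power_mono)
  from log_concave[OF this assms(3), of j]
  have "lah_power_sum l r n j * lah_power_sum l r n (j + 2) \<le> (lah_power_sum l r n (j + 1))\<^sup>2"
    by (simp flip: of_nat_mult of_nat_power)
  moreover have "nat (k - 1) = j" "nat k = j + 1" "nat (k + 1) = j + 2"
    using k by simp_all
  ultimately show ?thesis
    using assms(1) True by (simp add: lah_lr_eq_lah_power_sum)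
qed

end
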